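(* Let $n\ge2$, $\xi_n=\frac{n+1}{n-1}$, $\rho\in\mathbb{C}\setminus\{-\xi_n,-1,1,\xi_n\}$, and let $z_0,\dots,z_{2n-1}$ be the $2n$ zeros (with multiplicity) of $p_{2n}(\rho,z)$. Then $z_k\neq\pm1$ for all $k$. Furthermore each $z_k$ is of exactly one of the following two (mutually exclusive) types: Type 1: $s_{n+1}(\rho,z_k)=s_{n+1}(\rho,z_k^{-1})=0$; in this case $$\lambda_k=\frac{z_k^{1-n}(1-\rho^2)}{(z_k-\rho)^2}=\frac{z_k^{n+1}(1-\rho^2)}{(1-\rho z_k)^2}$$ is an eigenvalue (called a type-1 eigenvalue) of $K_n(\rho)$. Type 2: $c_{n+1}(\rho,z_k)=c_{n+1}(\rho,z_k^{-1})=0$; in this case $$\lambda_k=-\frac{z_k^{1-n}(1-\rho^2)}{(z_k-\rho)^2}=-\frac{z_k^{n+1}(1-\rho^2)}{(1-\rho z_k)^2}$$ is an eigenvalue (called a type-2 eigenvalue) of $K_n(\rho)$. There are $2\lfloor n/2\rfloor$ type-1 zeros and $2\lceil n/2\rceil$ type-2 zeros, corresponding (each inverse pair $\{z_k,z_k^{-1}\}$ giving one eigenvalue) to $\lfloor n/2\rfloor$ type-1 eigenvalues and $\lceil n/2\rceil$ type-2 eigenvalues.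
   Context: $K_n(\rho)=\left[\rho^{|j-k|}\right]_{j,k=1}^n$ (with $\rho^0=1$). $p_{2n}(\rho,z)=z^{2n}+(1+\rho^2)\sum_{k=1}^{n-1}z^{2k}-2\rho\sum_{k=0}^{n-1}z^{2k+1}+1$; $s_{n+1}(\rho,z)=z^{n+1}-\rho z^n+\rho z-1$; $c_{n+1}(\rho,z)=z^{n+1}-\rho z^n-\rho z+1$; for $z\neq\pm1$, $p_{2n}(\rho,z)=\frac{s_{n+1}(\rho,z)c_{n+1}(\rho,z)}{z^2-1}$. Zeros are counted with multiplicity. *)

theory Defs
  imports "HOL-Computational_Algebra.Polynomial" "Jordan_Normal_Form.Char_Poly"
begin

text \<open>Kac-Murdock-Szego matrix K_n(rho) = [rho^|j-k|] (0-based indices).\<close>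
definition KMS :: "nat \<Rightarrow> complex \<Rightarrow> complex mat" where
  "KMS n \<rho> = mat n n (\<lambda>(j,k). \<rho> ^ (if k \<le> j then j - k else k - j))"

definition p2n :: "nat \<Rightarrow> complex \<Rightarrow> complex poly" where
  "p2n n \<rho> = Polynomial.monom 1 (2*n)
      + Polynomial.smult (1 + \<rho>^2) (\<Sum>k\<in>{1..n-1}. Polynomial.monom 1 (2*k))
      - Polynomial.smult (2*\<rho>) (\<Sum>k\<in>{0..n-1}. Polynomial.monom 1 (2*k+1)) + 1"

definition s_fun :: "nat \<Rightarrow> complex \<Rightarrow> complex \<Rightarrow> complex" where
  "s_fun m \<rho> z = z^m - \<rho> * z^(m-1) + \<rho> * z - 1"

definition c_fun :: "nat \<Rightarrow> complex \<Rightarrow> complex \<Rightarrow> complex" where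
  "c_fun m \<rho> z = z^m - \<rho> * z^(m-1) - \<rho> * z + 1"

definition type1 :: "nat \<Rightarrow> complex \<Rightarrow> complex \<Rightarrow> bool" where
  "type1 n \<rho> z \<longleftrightarrow> s_fun (n+1) \<rho> z = 0 \<and> s_fun (n+1) \<rho> (inverse z) = 0"

definition type2 :: "nat \<Rightarrow> complex \<Rightarrow> complex \<Rightarrow> bool" where
  "type2 n \<rho> z \<longleftrightarrow> c_fun (n+1) \<rho> z = 0 \<and> c_fun (n+1) \<rho> (inverse z) = 0"

end

(*
  By the identity (z^2 - 1) p_2n(z) = s_(n+1)(z) c_(n+1)(z), every root of p_2n is a root of
  exactly one of s_(n+1), c_(n+1), since these two share a root only when rho = +-1.
  The factor z^2 - 1 is absorbed by them: s_(n+1) vanishes at 1, and at -1 for odd n,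
  while c_(n+1) vanishes at -1 for even n; this gives the counts 2 floor(n/2) and
  2 ceil(n/2), and the hypothesis on rho says exactly that p_2n(+-1) is nonzero.
  As s_(n+1) is anti-palindromic and c_(n+1) palindromic, p_2n is palindromic, so its
  roots of each type come in pairs {z, 1/z}.  A root with z^n (z - rho) = sigma (1 - rho z),
  sigma = +-1, gives the eigenvector (z^j - sigma z^(n-1-j))_j of K_n(rho): a row of K_n(rho)
  against (z^k)_k is a pair of geometric sums, and the boundary terms of a row and of its
  mirror row cancel by the root equation.
*)

theory Submission
  imports Defs "HOL-Computational_Algebra.Fundamental_Theorem_Algebra"
begin

section \<open>Multisets closed under an involution, reciprocal polynomials\<close>

lemma mset_involution_pairs:
  assumes involution: "\<And>x. f (f x) = x"
    and invariant: "image_mset f M = M"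
    and no_fixpoint: "\<And>x. x \<in># M \<Longrightarrow> f x \<noteq> x"
  shows "\<exists>A. M = A + image_mset f A"
  using invariant no_fixpoint
proof (induction M rule: full_multiset_induct)
  case (less M)
  show ?case
  proof (cases "M = {#}")
    case False
    then obtain x where x: "x \<in># M" by blast
    then have "f x \<in># M" using less.prems(1) by (metis image_eqI set_image_mset)
    then have pair: "{#x, f x#} \<subseteq># M"
      using x less.prems(2)[OF x] by (simp add: insert_subset_eq_iff in_diff_count)
    define N where "N = M - {#x, f x#}"
    have M_eq: "M = add_mset x (add_mset (f x) N)"
      using subset_mset.diff_add[OF pair, symmetric] unfolding N_def by simp
    then have "N \<subset># M" by simp
    moreover have "image_mset f N = N"
      using pair less.prems(1) by (simp add: N_def image_mset_Diff involution add_mset_commute)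
    moreover have "\<And>y. y \<in># N \<Longrightarrow> f y \<noteq> y"
      using less.prems(2) M_eq by auto
    ultimately obtain A where "N = A + image_mset f A"
      using less.IH by blast
    then have "M = add_mset x A + image_mset f (add_mset x A)"
      using M_eq by simp
    then show ?thesis by blast
  qed simp
qed

lemma order_le_order_reflect_poly:
  fixes p :: "'a::field poly"
  assumes "p \<noteq> 0" "a \<noteq> 0"
  shows "order a p \<le> order (inverse a) (reflect_poly p)"
proof -
  define k where "k = order a p"
  obtain r where r: "p = [:-a, 1:] ^ k * r"
    using order_1 unfolding k_def by (blast elim: dvdE)
  have "reflect_poly [:-a, 1:] = Polynomial.smult (-a) [:-inverse a, 1:]"
    using assms(2) by (simp add: reflect_poly_def)
  then have "reflect_poly p = (Polynomial.smult (-a) [:-inverse a, 1:]) ^ k * reflect_poly r"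
    by (simp only: r reflect_poly_mult reflect_poly_power)
  also have "\<dots> = [:-inverse a, 1:] ^ k * Polynomial.smult ((-a) ^ k) (reflect_poly r)"
    by (simp only: smult_power mult_smult_left mult_smult_right)
  finally have "reflect_poly p = [:-inverse a, 1:] ^ k * Polynomial.smult ((-a) ^ k) (reflect_poly r)" .
  then have "[:-inverse a, 1:] ^ k dvd reflect_poly p" by (rule dvdI)
  then show ?thesis using assms(1) by (simp add: order_divides k_def)
qed

lemma order_reflect_poly:
  fixes p :: "'a::field poly"
  assumes "coeff p 0 \<noteq> 0" "a \<noteq> 0"
  shows "order (inverse a) (reflect_poly p) = order a p"
  using order_le_order_reflect_poly[of p a] order_le_order_reflect_poly[of "reflect_poly p" "inverse a"]
    assms by fastforce

lemma image_mset_inverse_proots: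
  fixes p :: "'a::field poly"
  assumes "reflect_poly p = p" "coeff p 0 \<noteq> 0"
  shows "image_mset inverse (proots p) = proots p"
proof (rule multiset_eqI)
  fix z :: 'a
  have "p \<noteq> 0" using assms(2) by auto
  have "inverse -` {z} = {inverse z}" by (auto simp: inverse_eq_iff_eq)
  then have "count (image_mset inverse (proots p)) z = count (proots p) (inverse z)"
    by (cases "inverse z \<in># proots p") (auto simp: count_image_mset not_in_iff)
  also have "\<dots> = count (proots p) z"
    using order_reflect_poly[OF assms(2), of z] assms \<open>p \<noteq> 0\<close> by (cases "z = 0") auto
  finally show "count (image_mset inverse (proots p)) z = count (proots p) z" .
qed

lemma sum_order_eq_size_filter_proots:
  assumes "p \<noteq> 0"
  shows "(\<Sum>z\<in>{z. poly p z = 0 \<and> T z}. order z p) = size (filter_mset T (proots p))"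
  using assms by (simp add: size_multiset_overloaded_eq conj_commute)

lemma filter_proots_factor:
  fixes p q r s :: "'a::idom poly"
  assumes "p * q = r * s" "r \<noteq> 0" "s \<noteq> 0"
    and coprime: "\<And>z. poly r z = 0 \<Longrightarrow> poly s z \<noteq> 0"
  shows "filter_mset (\<lambda>z. poly r z = 0) (proots p + proots q) = proots r"
proof -
  have "p \<noteq> 0" "q \<noteq> 0" using assms(1-3) by auto
  then have "proots p + proots q = proots r + proots s"
    using assms(1-3) by (metis proots_mult)
  then show ?thesis
    using assms(2,3) coprime by (intro multiset_eqI) (auto simp: order_root intro: order_0I)
qed

section \<open>The factors s and c\<close>

definition s_poly :: "nat \<Rightarrow> complex \<Rightarrow> complex poly" where
  "s_poly m \<rho> = monom 1 m + monom (-\<rho>) (m - 1) + [:-1, \<rho>:]"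

definition c_poly :: "nat \<Rightarrow> complex \<Rightarrow> complex poly" where
  "c_poly m \<rho> = monom 1 m + monom (-\<rho>) (m - 1) + [:1, -\<rho>:]"

lemma poly_s_poly [simp]: "poly (s_poly m \<rho>) z = s_fun m \<rho> z"
  by (simp add: s_poly_def s_fun_def poly_monom algebra_simps)

lemma poly_c_poly [simp]: "poly (c_poly m \<rho>) z = c_fun m \<rho> z"
  by (simp add: c_poly_def c_fun_def poly_monom algebra_simps)

lemma coeff_s_poly_ge: "m \<ge> 2 \<Longrightarrow> k \<ge> m \<Longrightarrow> coeff (s_poly m \<rho>) k = (if k = m then 1 else 0)"
  by (auto simp: s_poly_def coeff_pCons coeff_monom split: nat.split)

lemma coeff_c_poly_ge: "m \<ge> 2 \<Longrightarrow> k \<ge> m \<Longrightarrow> coeff (c_poly m \<rho>) k = (if k = m then 1 else 0)"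
  by (auto simp: c_poly_def coeff_pCons coeff_monom split: nat.split)

lemma degree_s_poly: "m \<ge> 2 \<Longrightarrow> degree (s_poly m \<rho>) = m"
  by (intro antisym degree_le le_degree) (auto simp: coeff_s_poly_ge)

lemma degree_c_poly: "m \<ge> 2 \<Longrightarrow> degree (c_poly m \<rho>) = m"
  by (intro antisym degree_le le_degree) (auto simp: coeff_c_poly_ge)

lemma s_fun_inverse:
  assumes "m \<ge> 1" "z \<noteq> 0"
  shows "z ^ m * s_fun m \<rho> (inverse z) = - s_fun m \<rho> z"
proof -
  obtain k where "m = Suc k" using assms(1) by (cases m) auto
  then show ?thesis using assms(2) by (simp add: s_fun_def power_inverse field_simps)
qed

lemma c_fun_inverse:
  assumes "m \<ge> 1" "z \<noteq> 0"
  shows "z ^ m * c_fun m \<rho> (inverse z) = c_fun m \<rho> z"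
proof -
  obtain k where "m = Suc k" using assms(1) by (cases m) auto
  then show ?thesis using assms(2) by (simp add: c_fun_def power_inverse field_simps)
qed

lemma reflect_s_poly:
  assumes "m \<ge> 2"
  shows "reflect_poly (s_poly m \<rho>) = - s_poly m \<rho>"
proof (rule poly_eq_poly_eq_iff[THEN iffD1], rule ext)
  fix z :: complex
  show "poly (reflect_poly (s_poly m \<rho>)) z = poly (- s_poly m \<rho>) z"
  proof (cases "z = 0")
    case True
    then show ?thesis using assms by (simp add: degree_s_poly coeff_s_poly_ge s_fun_def power_0_left)
  next
    case False
    then show ?thesis using assms s_fun_inverse[of m z \<rho>]
      by (simp add: poly_reflect_poly_nz degree_s_poly)
  qed
qed

lemma reflect_c_poly:
  assumes "m \<ge> 2"
  shows "reflect_poly (c_poly m \<rho>) = c_poly m \<rho>"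
proof (rule poly_eq_poly_eq_iff[THEN iffD1], rule ext)
  fix z :: complex
  show "poly (reflect_poly (c_poly m \<rho>)) z = poly (c_poly m \<rho>) z"
  proof (cases "z = 0")
    case True
    then show ?thesis using assms by (simp add: degree_c_poly coeff_c_poly_ge c_fun_def power_0_left)
  next
    case False
    then show ?thesis using assms c_fun_inverse[of m z \<rho>]
      by (simp add: poly_reflect_poly_nz degree_c_poly)
  qed
qed

lemma type1_iff: "n \<ge> 1 \<Longrightarrow> type1 n \<rho> z \<longleftrightarrow> s_fun (n + 1) \<rho> z = 0"
  using s_fun_inverse[of "n + 1" z \<rho>] by (cases "z = 0") (auto simp: type1_def s_fun_def)

lemma type2_iff: "n \<ge> 1 \<Longrightarrow> type2 n \<rho> z \<longleftrightarrow> c_fun (n + 1) \<rho> z = 0"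
  using c_fun_inverse[of "n + 1" z \<rho>] by (cases "z = 0") (auto simp: type2_def c_fun_def)

lemma s_fun_c_fun_common_root:
  assumes "m \<ge> 1" "s_fun m \<rho> z = 0" "c_fun m \<rho> z = 0"
  shows "\<rho>\<^sup>2 = 1"
proof -
  have "s_fun m \<rho> z - c_fun m \<rho> z = 2 * (\<rho> * z - 1)"
    by (simp add: s_fun_def c_fun_def algebra_simps)
  then have \<rho>z: "\<rho> * z = 1" using assms by simp
  obtain k where m: "m = Suc k" using assms(1) by (cases m) auto
  have "s_fun m \<rho> z + c_fun m \<rho> z = 2 * (z ^ k * (z - \<rho>))"
    by (simp add: s_fun_def c_fun_def m algebra_simps)
  then have "z = \<rho>" using assms \<rho>z by auto
  then show ?thesis using \<rho>z by (simp add: power2_eq_square)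
qed

lemma s_fun_mult_c_fun:
  "s_fun (n + 1) \<rho> z * c_fun (n + 1) \<rho> z = z ^ (2 * n) * (z - \<rho>)\<^sup>2 - (1 - \<rho> * z)\<^sup>2"
proof -
  have "z ^ (2 * n) = z ^ n * z ^ n" by (simp add: mult_2 power_add)
  then show ?thesis by (simp add: s_fun_def c_fun_def power2_eq_square algebra_simps)
qed

lemma s_fun_minus_1_eq_0_iff:
  assumes "\<rho> \<noteq> -1"
  shows "s_fun (n + 1) \<rho> (-1) = 0 \<longleftrightarrow> odd n"
proof (cases "even n")
  case True
  have "\<rho> + 1 \<noteq> 0" using assms by (simp add: add_eq_0_iff2)
  moreover have "s_fun (n + 1) \<rho> (-1) = -2 * (\<rho> + 1)" using True by (simp add: s_fun_def algebra_simps)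
  ultimately show ?thesis using True by (simp only: mult_eq_0_iff) simp
qed (simp add: s_fun_def)

lemma c_fun_minus_1_eq_0_iff:
  assumes "\<rho> \<noteq> -1"
  shows "c_fun (n + 1) \<rho> (-1) = 0 \<longleftrightarrow> even n"
proof (cases "even n")
  case False
  have "\<rho> + 1 \<noteq> 0" using assms by (simp add: add_eq_0_iff2)
  moreover have "c_fun (n + 1) \<rho> (-1) = 2 * (\<rho> + 1)" using False by (simp add: c_fun_def algebra_simps)
  ultimately show ?thesis using False by (simp only: mult_eq_0_iff) simp
qed (simp add: c_fun_def)

section \<open>The polynomial p_2n\<close>

lemma poly_p2n:
  "poly (p2n n \<rho>) z = z ^ (2 * n) + (1 + \<rho>\<^sup>2) * (\<Sum>k = 1..n - 1. z ^ (2 * k))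
     - 2 * \<rho> * (\<Sum>k = 0..n - 1. z ^ (2 * k + 1)) + 1"
  by (simp add: p2n_def poly_sum poly_monom)

lemma poly_p2n_Suc:
  assumes "n \<ge> 1"
  shows "poly (p2n (Suc n) \<rho>) z = poly (p2n n \<rho>) z + z ^ (2 * n) * (z - \<rho>)\<^sup>2"
proof -
  obtain k where n: "n = Suc k" using assms by (cases n) auto
  have "z ^ (2 * Suc n) = z\<^sup>2 * z ^ (2 * n)" "z ^ (2 * n + 1) = z ^ (2 * n) * z"
    by (simp_all only: mult_Suc_right power_add power_one_right)
  then show ?thesis
    by (simp add: poly_p2n n power2_eq_square algebra_simps)
qed

lemma poly_p2n_mult:
  "n \<ge> 1 \<Longrightarrow> poly (p2n n \<rho>) z * (z\<^sup>2 - 1) = z ^ (2 * n) * (z - \<rho>)\<^sup>2 - (1 - \<rho> * z)\<^sup>2"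
proof (induction n rule: nat_induct_at_least)
  case base
  then show ?case by (simp add: poly_p2n power2_eq_square algebra_simps)
next
  case (Suc n)
  have "poly (p2n (Suc n) \<rho>) z * (z\<^sup>2 - 1)
      = poly (p2n n \<rho>) z * (z\<^sup>2 - 1) + z ^ (2 * n) * (z - \<rho>)\<^sup>2 * (z\<^sup>2 - 1)"
    by (simp add: poly_p2n_Suc[OF Suc.hyps] algebra_simps)
  also have "\<dots> = z\<^sup>2 * z ^ (2 * n) * (z - \<rho>)\<^sup>2 - (1 - \<rho> * z)\<^sup>2"
    unfolding Suc.IH by (simp add: algebra_simps)
  also have "z\<^sup>2 * z ^ (2 * n) = z ^ (2 * Suc n)" by (simp only: mult_Suc_right power_add)
  finally show ?case .
qed

lemma p2n_factorization:
  "n \<ge> 1 \<Longrightarrow> p2n n \<rho> * [:-1, 0, 1:] = s_poly (n + 1) \<rho> * c_poly (n + 1) \<rho>"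
proof (intro poly_eq_poly_eq_iff[THEN iffD1] ext)
  fix z :: complex
  assume "n \<ge> 1"
  have "poly [:-1, 0, 1:] z = z\<^sup>2 - 1" by (simp add: power2_eq_square)
  moreover have "poly (p2n n \<rho>) z * (z\<^sup>2 - 1) = s_fun (n + 1) \<rho> z * c_fun (n + 1) \<rho> z"
    by (simp only: poly_p2n_mult[OF \<open>n \<ge> 1\<close>] s_fun_mult_c_fun)
  ultimately show "poly (p2n n \<rho> * [:-1, 0, 1:]) z = poly (s_poly (n + 1) \<rho> * c_poly (n + 1) \<rho>) z"
    by (simp only: poly_mult poly_s_poly poly_c_poly)
qed

lemma reflect_p2n:
  assumes "n \<ge> 1"
  shows "reflect_poly (p2n n \<rho>) = p2n n \<rho>"
proof -
  define X where "X = [:-1, 0, 1::complex:]"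
  have factors: "p2n n \<rho> * X = s_poly (n + 1) \<rho> * c_poly (n + 1) \<rho>"
    unfolding X_def using assms by (rule p2n_factorization)
  have "reflect_poly X = - X" by (simp add: X_def reflect_poly_def)
  then have "reflect_poly (p2n n \<rho>) * (- X) = reflect_poly (s_poly (n + 1) \<rho> * c_poly (n + 1) \<rho>)"
    by (simp only: reflect_poly_mult flip: factors)
  also have "\<dots> = - (p2n n \<rho> * X)"
    using assms by (simp add: reflect_poly_mult reflect_s_poly reflect_c_poly factors)
  finally have "reflect_poly (p2n n \<rho>) * X = p2n n \<rho> * X" by simp
  moreover have "X \<noteq> 0" by (simp add: X_def)
  ultimately show ?thesis by (metis mult_right_cancel)
qed

lemma poly_p2n_0: "n \<ge> 1 \<Longrightarrow> poly (p2n n \<rho>) 0 = 1"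
  by (simp add: poly_p2n power_0_left)

lemma poly_p2n_1: "n \<ge> 1 \<Longrightarrow> poly (p2n n \<rho>) 1 = (\<rho> - 1) * ((of_nat n - 1) * \<rho> - (of_nat n + 1))"
  by (simp add: poly_p2n of_nat_diff power2_eq_square algebra_simps)

lemma poly_p2n_minus_1:
  "n \<ge> 1 \<Longrightarrow> poly (p2n n \<rho>) (-1) = (\<rho> + 1) * ((of_nat n - 1) * \<rho> + (of_nat n + 1))"
  by (simp add: poly_p2n of_nat_diff power2_eq_square algebra_simps)

lemma p2n_root_1_iff:
  assumes "n \<ge> 2"
  shows "poly (p2n n \<rho>) 1 = 0 \<longleftrightarrow> \<rho> = 1 \<or> \<rho> = complex_of_real ((real n + 1) / (real n - 1))"
proof -
  have "(of_nat n - 1 :: complex) \<noteq> 0" using assms by simp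
  then have "(of_nat n - 1) * \<rho> - (of_nat n + 1) = 0 \<longleftrightarrow> \<rho> = (of_nat n + 1) / (of_nat n - 1)"
    by (auto simp: field_simps)
  moreover have "poly (p2n n \<rho>) 1 = 0 \<longleftrightarrow> \<rho> = 1 \<or> (of_nat n - 1) * \<rho> - (of_nat n + 1) = 0"
    using assms by (simp add: poly_p2n_1)
  moreover have "complex_of_real ((real n + 1) / (real n - 1)) = (of_nat n + 1) / (of_nat n - 1)"
    by simp
  ultimately show ?thesis by presburger
qed

lemma p2n_root_minus_1_iff:
  assumes "n \<ge> 2"
  shows "poly (p2n n \<rho>) (-1) = 0 \<longleftrightarrow> \<rho> = -1 \<or> \<rho> = - complex_of_real ((real n + 1) / (real n - 1))"
proof -
  have "(of_nat n - 1 :: complex) \<noteq> 0" using assms by simp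
  then have "(of_nat n - 1) * \<rho> + (of_nat n + 1) = 0 \<longleftrightarrow> \<rho> = - ((of_nat n + 1) / (of_nat n - 1))"
    by (auto simp: field_simps)
  moreover have "poly (p2n n \<rho>) (-1) = 0 \<longleftrightarrow> \<rho> = -1 \<or> (of_nat n - 1) * \<rho> + (of_nat n + 1) = 0"
    using assms by (simp add: poly_p2n_minus_1 add_eq_0_iff2)
  moreover have "complex_of_real ((real n + 1) / (real n - 1)) = (of_nat n + 1) / (of_nat n - 1)"
    by simp
  ultimately show ?thesis by presburger
qed

section \<open>Roots of p_2n by type\<close>

lemma p2n_root_type:
  assumes "n \<ge> 1" "\<rho>\<^sup>2 \<noteq> 1" "poly (p2n n \<rho>) z = 0"
  shows "(type1 n \<rho> z \<and> \<not> type2 n \<rho> z) \<or> (type2 n \<rho> z \<and> \<not> type1 n \<rho> z)"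
proof -
  have "s_fun (n + 1) \<rho> z * c_fun (n + 1) \<rho> z = poly (p2n n \<rho>) z * (z\<^sup>2 - 1)"
    by (simp only: poly_p2n_mult[OF assms(1)] s_fun_mult_c_fun)
  then have "s_fun (n + 1) \<rho> z * c_fun (n + 1) \<rho> z = 0" using assms(3) by simp
  then show ?thesis
    using s_fun_c_fun_common_root[of "n + 1" \<rho> z] assms(1,2) by (auto simp: type1_iff type2_iff)
qed

lemma proots_sq_minus_1: "proots [:-1, 0, 1::complex:] = {#1, -1#}"
proof -
  have "proots [:-1, 0, 1::complex:] = proots ([:-1, 1:] * [:1, 1:])" by simp
  also have "\<dots> = {#1, -1#}" by (subst proots_mult) auto
  finally show ?thesis .
qed

lemma proots_s_poly_type1:
  assumes "n \<ge> 1" "\<rho>\<^sup>2 \<noteq> 1"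
  shows "filter_mset (type1 n \<rho>) (proots (p2n n \<rho>)) + filter_mset (type1 n \<rho>) {#1, -1#}
    = proots (s_poly (n + 1) \<rho>)"
proof -
  have "s_poly (n + 1) \<rho> \<noteq> 0" "c_poly (n + 1) \<rho> \<noteq> 0"
    using degree_s_poly[of "n + 1" \<rho>] degree_c_poly[of "n + 1" \<rho>] assms(1) by auto
  have "filter_mset (type1 n \<rho>) (proots (p2n n \<rho>)) + filter_mset (type1 n \<rho>) {#1, -1#}
      = filter_mset (type1 n \<rho>) (proots (p2n n \<rho>) + proots [:-1, 0, 1:])"
    by (simp add: proots_sq_minus_1)
  also have "\<dots> = filter_mset (\<lambda>z. poly (s_poly (n + 1) \<rho>) z = 0) (proots (p2n n \<rho>) + proots [:-1, 0, 1:])"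
    using assms(1) by (intro filter_mset_cong) (simp_all add: type1_iff)
  also have "\<dots> = proots (s_poly (n + 1) \<rho>)"
    using s_fun_c_fun_common_root[of "n + 1" \<rho>] assms \<open>s_poly (n + 1) \<rho> \<noteq> 0\<close> \<open>c_poly (n + 1) \<rho> \<noteq> 0\<close>
    by (intro filter_proots_factor[OF p2n_factorization[OF assms(1)]]) auto
  finally show ?thesis .
qed

lemma proots_c_poly_type2:
  assumes "n \<ge> 1" "\<rho>\<^sup>2 \<noteq> 1"
  shows "filter_mset (type2 n \<rho>) (proots (p2n n \<rho>)) + filter_mset (type2 n \<rho>) {#1, -1#}
    = proots (c_poly (n + 1) \<rho>)"
proof -
  have "s_poly (n + 1) \<rho> \<noteq> 0" "c_poly (n + 1) \<rho> \<noteq> 0"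
    using degree_s_poly[of "n + 1" \<rho>] degree_c_poly[of "n + 1" \<rho>] assms(1) by auto
  have factors: "p2n n \<rho> * [:-1, 0, 1:] = c_poly (n + 1) \<rho> * s_poly (n + 1) \<rho>"
    using p2n_factorization[OF assms(1)] by (metis mult.commute)
  have "filter_mset (type2 n \<rho>) (proots (p2n n \<rho>)) + filter_mset (type2 n \<rho>) {#1, -1#}
      = filter_mset (type2 n \<rho>) (proots (p2n n \<rho>) + proots [:-1, 0, 1:])"
    by (simp add: proots_sq_minus_1)
  also have "\<dots> = filter_mset (\<lambda>z. poly (c_poly (n + 1) \<rho>) z = 0) (proots (p2n n \<rho>) + proots [:-1, 0, 1:])"
    using assms(1) by (intro filter_mset_cong) (simp_all add: type2_iff)
  also have "\<dots> = proots (c_poly (n + 1) \<rho>)"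
    using s_fun_c_fun_common_root[of "n + 1" \<rho>] assms \<open>s_poly (n + 1) \<rho> \<noteq> 0\<close> \<open>c_poly (n + 1) \<rho> \<noteq> 0\<close>
    by (intro filter_proots_factor[OF factors]) auto
  finally show ?thesis .
qed

lemma size_type1_roots:
  assumes "n \<ge> 1" "\<rho>\<^sup>2 \<noteq> 1"
  shows "size (filter_mset (type1 n \<rho>) (proots (p2n n \<rho>))) = 2 * (n div 2)"
proof -
  have "\<rho> \<noteq> -1" using assms(2) by auto
  then have "type1 n \<rho> (-1) \<longleftrightarrow> odd n"
    using assms(1) s_fun_minus_1_eq_0_iff[OF \<open>\<rho> \<noteq> -1\<close>, of n] by (simp only: type1_iff)
  moreover have "type1 n \<rho> 1" using assms(1) by (simp add: type1_iff s_fun_def)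
  ultimately have "size (filter_mset (type1 n \<rho>) {#1, -1#}) = (if odd n then 2 else 1)"
    by simp
  moreover have "size (proots (s_poly (n + 1) \<rho>)) = n + 1"
    using degree_s_poly[of "n + 1" \<rho>] assms(1) by (simp add: size_proots_complex)
  ultimately have "size (filter_mset (type1 n \<rho>) (proots (p2n n \<rho>))) + (if odd n then 2 else 1) = n + 1"
    using arg_cong[OF proots_s_poly_type1[OF assms], of size] by (simp only: size_union)
  then show ?thesis by (cases "odd n"; simp; presburger)
qed

lemma size_type2_roots:
  assumes "n \<ge> 1" "\<rho>\<^sup>2 \<noteq> 1"
  shows "size (filter_mset (type2 n \<rho>) (proots (p2n n \<rho>))) = 2 * ((n + 1) div 2)"
proof -
  have "\<rho> \<noteq> 1" "\<rho> \<noteq> -1" using assms(2) by auto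
  then have "type2 n \<rho> (-1) \<longleftrightarrow> even n"
    using assms(1) c_fun_minus_1_eq_0_iff[OF \<open>\<rho> \<noteq> -1\<close>, of n] by (simp only: type2_iff)
  moreover have "\<not> type2 n \<rho> 1" using assms(1) \<open>\<rho> \<noteq> 1\<close> by (simp add: type2_iff c_fun_def)
  ultimately have "size (filter_mset (type2 n \<rho>) {#1, -1#}) = (if odd n then 0 else 1)"
    by simp
  moreover have "size (proots (c_poly (n + 1) \<rho>)) = n + 1"
    using degree_c_poly[of "n + 1" \<rho>] assms(1) by (simp add: size_proots_complex)
  ultimately have "size (filter_mset (type2 n \<rho>) (proots (p2n n \<rho>))) + (if odd n then 0 else 1) = n + 1"
    using arg_cong[OF proots_c_poly_type2[OF assms], of size] by (simp only: size_union)
  then show ?thesis by (cases "odd n"; simp; presburger)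
qed

lemma p2n_filter_proots_inverse_pairs:
  assumes "n \<ge> 1" "poly (p2n n \<rho>) 1 \<noteq> 0" "poly (p2n n \<rho>) (-1) \<noteq> 0"
    and "\<And>z. T (inverse z) = T z"
  shows "\<exists>A. filter_mset T (proots (p2n n \<rho>)) = A + image_mset inverse A"
proof (rule mset_involution_pairs)
  have "image_mset inverse (proots (p2n n \<rho>)) = proots (p2n n \<rho>)"
    using assms(1) by (intro image_mset_inverse_proots)
      (simp_all add: reflect_p2n poly_p2n_0 flip: poly_0_coeff_0)
  moreover have "(\<lambda>z. T (inverse z)) = T" using assms(4) by (rule ext)
  ultimately show "image_mset inverse (filter_mset T (proots (p2n n \<rho>))) = filter_mset T (proots (p2n n \<rho>))"
    using filter_mset_image_mset[of T inverse "proots (p2n n \<rho>)"] by simp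
next
  fix z :: complex
  assume "z \<in># filter_mset T (proots (p2n n \<rho>))"
  moreover have "p2n n \<rho> \<noteq> 0" using poly_p2n_0[OF assms(1), of \<rho>] by auto
  ultimately have "poly (p2n n \<rho>) z = 0" by simp
  then have "z \<noteq> 0" "z \<noteq> 1" "z \<noteq> -1" using assms(2,3) poly_p2n_0[OF assms(1)] by auto
  show "inverse z \<noteq> z"
  proof
    assume "inverse z = z"
    then have "z\<^sup>2 = 1" using \<open>z \<noteq> 0\<close> by (metis power2_eq_square right_inverse)
    then show False using \<open>z \<noteq> 1\<close> \<open>z \<noteq> -1\<close> by (simp add: power2_eq_1_iff)
  qed
qed simp

lemma type1_roots_inverse_pairs:
  assumes "n \<ge> 1" "\<rho>\<^sup>2 \<noteq> 1" "poly (p2n n \<rho>) 1 \<noteq> 0" "poly (p2n n \<rho>) (-1) \<noteq> 0"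
  shows "\<exists>A. size A = n div 2 \<and> filter_mset (type1 n \<rho>) (proots (p2n n \<rho>)) = A + image_mset inverse A"
proof -
  obtain A where A: "filter_mset (type1 n \<rho>) (proots (p2n n \<rho>)) = A + image_mset inverse A"
    using p2n_filter_proots_inverse_pairs[OF assms(1,3,4), of "type1 n \<rho>"] by (auto simp: type1_def)
  moreover from this have "size A = n div 2" using size_type1_roots[OF assms(1,2)] by simp
  ultimately show ?thesis by blast
qed

lemma type2_roots_inverse_pairs:
  assumes "n \<ge> 1" "\<rho>\<^sup>2 \<noteq> 1" "poly (p2n n \<rho>) 1 \<noteq> 0" "poly (p2n n \<rho>) (-1) \<noteq> 0"
  shows "\<exists>B. size B = (n + 1) div 2 \<and> filter_mset (type2 n \<rho>) (proots (p2n n \<rho>)) = B + image_mset inverse B"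
proof -
  obtain B where B: "filter_mset (type2 n \<rho>) (proots (p2n n \<rho>)) = B + image_mset inverse B"
    using p2n_filter_proots_inverse_pairs[OF assms(1,3,4), of "type2 n \<rho>"] by (auto simp: type2_def)
  moreover from this have "size B = (n + 1) div 2" using size_type2_roots[OF assms(1,2)] by simp
  ultimately show ?thesis by blast
qed

lemma nat_ceiling_half: "nat \<lceil>real n / 2\<rceil> = (n + 1) div 2"
proof (cases "even n")
  case True
  then obtain m where n: "n = 2 * m" by (rule evenE)
  then have "real n / 2 = real m" by simp
  then show ?thesis using n by simp
next
  case False
  then obtain m where n: "n = 2 * m + 1" by (rule oddE)
  have "\<lceil>real n / 2\<rceil> = int m + 1" by (rule ceiling_unique) (simp_all add: n)
  then show ?thesis by (simp add: n)
qed

section \<open>Eigenvectors of the Kac-Murdock-Szego matrix\<close>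

lemma KMS_row_geometric:
  fixes \<rho> z :: complex
  assumes "j < n"
  shows "(\<Sum>k<n. KMS n \<rho> $$ (j, k) * z ^ k) * ((z - \<rho>) * (1 - \<rho> * z))
    = (1 - \<rho>\<^sup>2) * z ^ (j + 1) - \<rho> ^ (j + 1) * (1 - \<rho> * z) - \<rho> ^ (n - j) * z ^ n * (z - \<rho>)"
proof -
  obtain m where n: "n = j + 1 + m" using assms by (metis add.commute add_Suc less_imp_Suc_add plus_1_eq_Suc)
  define L where "L = (\<Sum>k<j + 1. KMS n \<rho> $$ (j, k) * z ^ k)"
  define U where "U = (\<Sum>k\<in>{j + 1..<n}. KMS n \<rho> $$ (j, k) * z ^ k)"
  have "(\<Sum>k<n. KMS n \<rho> $$ (j, k) * z ^ k) = L + U"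
    unfolding L_def U_def atLeast0LessThan[symmetric]
    by (rule sum.atLeastLessThan_concat[symmetric]) (simp_all add: n)
  have "L = (\<Sum>k<j + 1. \<rho> ^ (j + 1 - Suc k) * z ^ k)"
    unfolding L_def by (intro sum.cong) (auto simp: KMS_def n)
  then have lower: "L * (z - \<rho>) = z ^ (j + 1) - \<rho> ^ (j + 1)"
    using power_diff_sumr2[of z "j + 1" \<rho>] by (simp add: mult.commute)
  have "{j + 1..<n} = {0 + (j + 1)..<m + (j + 1)}" by (simp add: n add.commute)
  then have "U = (\<Sum>i<m. KMS n \<rho> $$ (j, i + (j + 1)) * z ^ (i + (j + 1)))"
    unfolding U_def by (simp only: sum.shift_bounds_nat_ivl atLeast0LessThan)
  also have "\<dots> = (\<Sum>i<m. \<rho> ^ (i + 1) * z ^ (i + (j + 1)))"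
    by (intro sum.cong) (auto simp: KMS_def n)
  also have "\<dots> = \<rho> * z ^ (j + 1) * (\<Sum>i<m. (\<rho> * z) ^ i)"
    by (simp add: sum_distrib_left power_add power_mult_distrib mult_ac)
  finally have "U * (1 - \<rho> * z) = \<rho> * z ^ (j + 1) * ((1 - \<rho> * z) * (\<Sum>i<m. (\<rho> * z) ^ i))"
    by (simp only: mult_ac)
  also have "\<dots> = \<rho> * z ^ (j + 1) * (1 - (\<rho> * z) ^ m)"
    by (simp only: one_diff_power_eq)
  also have "\<dots> = \<rho> * z ^ (j + 1) - \<rho> ^ (n - j) * z ^ n"
    by (simp add: n power_add power_mult_distrib algebra_simps)
  finally have upper: "U * (1 - \<rho> * z) = \<rho> * z ^ (j + 1) - \<rho> ^ (n - j) * z ^ n" .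
  have "(L + U) * ((z - \<rho>) * (1 - \<rho> * z)) = L * (z - \<rho>) * (1 - \<rho> * z) + U * (1 - \<rho> * z) * (z - \<rho>)"
    by (simp add: algebra_simps)
  also have "\<dots> = (z ^ (j + 1) - \<rho> ^ (j + 1)) * (1 - \<rho> * z) + (\<rho> * z ^ (j + 1) - \<rho> ^ (n - j) * z ^ n) * (z - \<rho>)"
    by (simp only: lower upper)
  also have "\<dots> = (1 - \<rho>\<^sup>2) * z ^ (j + 1) - \<rho> ^ (j + 1) * (1 - \<rho> * z) - \<rho> ^ (n - j) * z ^ n * (z - \<rho>)"
    by (simp add: power2_eq_square algebra_simps)
  finally show ?thesis using \<open>(\<Sum>k<n. KMS n \<rho> $$ (j, k) * z ^ k) = L + U\<close> by simp
qed

lemma KMS_row_reversed: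
  assumes "j < n"
  shows "(\<Sum>k<n. KMS n \<rho> $$ (j, k) * z ^ (n - 1 - k)) = (\<Sum>k<n. KMS n \<rho> $$ (n - 1 - j, k) * z ^ k)"
proof -
  have "(\<Sum>k<n. KMS n \<rho> $$ (n - 1 - j, k) * z ^ k)
      = (\<Sum>k<n. KMS n \<rho> $$ (n - 1 - j, n - Suc k) * z ^ (n - Suc k))"
    by (rule sum.nat_diff_reindex[symmetric])
  also have "\<dots> = (\<Sum>k<n. KMS n \<rho> $$ (j, k) * z ^ (n - 1 - k))"
    using assms by (intro sum.cong) (auto simp: KMS_def)
  finally show ?thesis by simp
qed

lemma KMS_mult_root_vector:
  fixes \<rho> z \<sigma> :: complex
  assumes "j < n" "\<sigma>\<^sup>2 = 1" "z ^ n * (z - \<rho>) = \<sigma> * (1 - \<rho> * z)"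
  shows "(\<Sum>k<n. KMS n \<rho> $$ (j, k) * (z ^ k - \<sigma> * z ^ (n - 1 - k))) * ((z - \<rho>) * (1 - \<rho> * z))
    = (1 - \<rho>\<^sup>2) * z * (z ^ j - \<sigma> * z ^ (n - 1 - j))"
proof -
  define D where "D = (z - \<rho>) * (1 - \<rho> * z)"
  have row_j: "(\<Sum>k<n. KMS n \<rho> $$ (j, k) * z ^ k) * D
      = (1 - \<rho>\<^sup>2) * z ^ (j + 1) - \<rho> ^ (j + 1) * (1 - \<rho> * z) - \<rho> ^ (n - j) * (\<sigma> * (1 - \<rho> * z))"
    using KMS_row_geometric[OF assms(1), of \<rho> z] assms(3) by (simp add: D_def mult.assoc)
  have row_reversed: "(\<Sum>k<n. KMS n \<rho> $$ (n - 1 - j, k) * z ^ k) * D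
      = (1 - \<rho>\<^sup>2) * z ^ (n - j) - \<rho> ^ (n - j) * (1 - \<rho> * z) - \<rho> ^ (j + 1) * (\<sigma> * (1 - \<rho> * z))"
    using KMS_row_geometric[of "n - 1 - j" n \<rho> z] assms(1,3) by (simp add: D_def mult.assoc Suc_diff_Suc)
  have zpow: "z ^ (n - j) = z * z ^ (n - 1 - j)" "z ^ (j + 1) = z * z ^ j"
    using assms(1) by (simp_all flip: power_Suc add: Suc_diff_Suc)
  have "(\<Sum>k<n. KMS n \<rho> $$ (j, k) * (z ^ k - \<sigma> * z ^ (n - 1 - k)))
      = (\<Sum>k<n. KMS n \<rho> $$ (j, k) * z ^ k) - \<sigma> * (\<Sum>k<n. KMS n \<rho> $$ (j, k) * z ^ (n - 1 - k))"
    by (simp add: sum_subtractf sum_distrib_left right_diff_distrib mult_ac)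
  also have "\<dots> = (\<Sum>k<n. KMS n \<rho> $$ (j, k) * z ^ k) - \<sigma> * (\<Sum>k<n. KMS n \<rho> $$ (n - 1 - j, k) * z ^ k)"
    by (simp only: KMS_row_reversed[OF assms(1)])
  finally have "(\<Sum>k<n. KMS n \<rho> $$ (j, k) * (z ^ k - \<sigma> * z ^ (n - 1 - k))) * D
      = (\<Sum>k<n. KMS n \<rho> $$ (j, k) * z ^ k) * D - \<sigma> * ((\<Sum>k<n. KMS n \<rho> $$ (n - 1 - j, k) * z ^ k) * D)"
    by (simp only: left_diff_distrib mult.assoc)
  also have "\<dots> = (1 - \<rho>\<^sup>2) * z * (z ^ j - \<sigma> * z ^ (n - 1 - j)) + \<rho> ^ (j + 1) * (1 - \<rho> * z) * (\<sigma>\<^sup>2 - 1)"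
    unfolding row_j row_reversed zpow by (simp add: power2_eq_square algebra_simps)
  finally show ?thesis using assms(2) by (simp add: D_def)
qed

lemma root_equation_nondegenerate:
  fixes \<rho> z \<sigma> :: complex
  assumes "\<sigma>\<^sup>2 = 1" "z ^ n * (z - \<rho>) = \<sigma> * (1 - \<rho> * z)" "\<rho>\<^sup>2 \<noteq> 1"
  shows "(z - \<rho>) * (1 - \<rho> * z) \<noteq> 0"
proof -
  have "\<sigma> \<noteq> 0" using assms(1) by auto
  have "z \<noteq> \<rho>"
  proof
    assume "z = \<rho>"
    then have "\<sigma> * (1 - \<rho>\<^sup>2) = 0" using assms(2) by (simp add: power2_eq_square)
    then show False using \<open>\<sigma> \<noteq> 0\<close> assms(3) by simp
  qed
  moreover have "1 - \<rho> * z \<noteq> 0"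
  proof
    assume "1 - \<rho> * z = 0"
    moreover from this have "z \<noteq> 0" by auto
    ultimately show False using assms(2) \<open>z \<noteq> \<rho>\<close> by simp
  qed
  ultimately show ?thesis by simp
qed

lemma KMS_eigenvalue_of_root:
  fixes \<rho> z \<sigma> :: complex
  assumes "n \<ge> 2" "\<sigma>\<^sup>2 = 1" "z ^ n * (z - \<rho>) = \<sigma> * (1 - \<rho> * z)" "z\<^sup>2 \<noteq> 1" "\<rho>\<^sup>2 \<noteq> 1"
  shows "eigenvalue (KMS n \<rho>) ((1 - \<rho>\<^sup>2) * z / ((z - \<rho>) * (1 - \<rho> * z)))"
proof -
  define D where "D = (z - \<rho>) * (1 - \<rho> * z)"
  have "D \<noteq> 0" unfolding D_def using assms(2,3,5) by (rule root_equation_nondegenerate)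
  define v where "v = vec n (\<lambda>j. z ^ j - \<sigma> * z ^ (n - 1 - j))"
  have "KMS n \<rho> *\<^sub>v v = ((1 - \<rho>\<^sup>2) * z / D) \<cdot>\<^sub>v v"
  proof (rule eq_vecI)
    fix j
    assume "j < dim_vec (((1 - \<rho>\<^sup>2) * z / D) \<cdot>\<^sub>v v)"
    then have "j < n" by (simp add: v_def)
    then have "(KMS n \<rho> *\<^sub>v v) $ j = (\<Sum>k<n. KMS n \<rho> $$ (j, k) * (z ^ k - \<sigma> * z ^ (n - 1 - k)))"
      by (auto simp: KMS_def v_def scalar_prod_def atLeast0LessThan intro!: sum.cong)
    also have "\<dots> = (1 - \<rho>\<^sup>2) * z / D * (z ^ j - \<sigma> * z ^ (n - 1 - j))"
      using KMS_mult_root_vector[OF \<open>j < n\<close> assms(2,3)] \<open>D \<noteq> 0\<close> by (simp add: D_def field_simps)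
    finally show "(KMS n \<rho> *\<^sub>v v) $ j = (((1 - \<rho>\<^sup>2) * z / D) \<cdot>\<^sub>v v) $ j"
      using \<open>j < n\<close> by (simp add: v_def)
  qed (simp add: KMS_def v_def)
  moreover have "v \<noteq> 0\<^sub>v n"
  proof
    assume "v = 0\<^sub>v n"
    then have "v $ 0 = 0" "v $ 1 = 0" using assms(1) by auto
    then have v0: "1 - \<sigma> * z ^ (n - 1) = 0" and v1: "z - \<sigma> * z ^ (n - 2) = 0"
      using assms(1) by (auto simp: v_def numeral_2_eq_2)
    have "z ^ (n - 1) = z * z ^ (n - 2)"
      using assms(1) by (simp flip: power_Suc add: Suc_diff_Suc numeral_2_eq_2)
    then have "z\<^sup>2 - 1 = z * (z - \<sigma> * z ^ (n - 2)) - (1 - \<sigma> * z ^ (n - 1))"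
      by (simp add: power2_eq_square algebra_simps)
    then have "z\<^sup>2 - 1 = 0" unfolding v0 v1 by simp
    then show False using assms(4) by simp
  qed
  ultimately show ?thesis
    unfolding eigenvalue_def eigenvector_def D_def by (intro exI[of _ v]) (simp add: KMS_def v_def)
qed

lemma root_eigenvalue_formulas:
  fixes \<rho> z \<sigma> :: complex
  assumes "\<sigma>\<^sup>2 = 1" "z ^ n * (z - \<rho>) = \<sigma> * (1 - \<rho> * z)" "z \<noteq> 0"
  shows "(1 - \<rho>\<^sup>2) * z / ((z - \<rho>) * (1 - \<rho> * z)) = \<sigma> * (z powi (1 - int n) * (1 - \<rho>\<^sup>2) / (z - \<rho>)\<^sup>2)"
    and "z powi (1 - int n) * (1 - \<rho>\<^sup>2) / (z - \<rho>)\<^sup>2 = z ^ (n + 1) * (1 - \<rho>\<^sup>2) / (1 - \<rho> * z)\<^sup>2"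
proof -
  have root: "1 - \<rho> * z = \<sigma> * (z ^ n * (z - \<rho>))" using assms(1,2) by (simp add: power2_eq_square)
  have "inverse \<sigma> = \<sigma>" using assms(1) by (intro inverse_unique) (simp add: power2_eq_square)
  have "z powi (1 - int n) = z / z ^ n" using assms(3) by (simp add: power_int_diff)
  then have powi: "z powi (1 - int n) * (1 - \<rho>\<^sup>2) / (z - \<rho>)\<^sup>2 = (1 - \<rho>\<^sup>2) * z / (z ^ n * (z - \<rho>)\<^sup>2)"
    by (simp add: mult_ac)
  have "(1 - \<rho>\<^sup>2) * z / ((z - \<rho>) * (1 - \<rho> * z)) = (1 - \<rho>\<^sup>2) * z / (z ^ n * (z - \<rho>)\<^sup>2) / \<sigma>"
    by (simp add: root power2_eq_square mult_ac)
  also have "\<dots> = \<sigma> * (z powi (1 - int n) * (1 - \<rho>\<^sup>2) / (z - \<rho>)\<^sup>2)"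
    unfolding powi by (simp add: divide_inverse \<open>inverse \<sigma> = \<sigma>\<close> mult_ac)
  finally show "(1 - \<rho>\<^sup>2) * z / ((z - \<rho>) * (1 - \<rho> * z)) = \<sigma> * (z powi (1 - int n) * (1 - \<rho>\<^sup>2) / (z - \<rho>)\<^sup>2)" .
  have "(1 - \<rho> * z)\<^sup>2 = z ^ n * (z ^ n * (z - \<rho>)\<^sup>2)"
    unfolding root power_mult_distrib assms(1) by (simp add: power2_eq_square)
  then have "z ^ (n + 1) * (1 - \<rho>\<^sup>2) / (1 - \<rho> * z)\<^sup>2
      = (z ^ n * ((1 - \<rho>\<^sup>2) * z)) / (z ^ n * (z ^ n * (z - \<rho>)\<^sup>2))"
    by (simp add: mult_ac)
  also have "\<dots> = (1 - \<rho>\<^sup>2) * z / (z ^ n * (z - \<rho>)\<^sup>2)"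
    using assms(3) by (intro nonzero_mult_divide_mult_cancel_left) simp
  finally show "z powi (1 - int n) * (1 - \<rho>\<^sup>2) / (z - \<rho>)\<^sup>2 = z ^ (n + 1) * (1 - \<rho>\<^sup>2) / (1 - \<rho> * z)\<^sup>2"
    by (simp add: powi)
qed

lemma type1_eigenvalue:
  assumes "n \<ge> 2" "\<rho>\<^sup>2 \<noteq> 1" "z\<^sup>2 \<noteq> 1" "type1 n \<rho> z"
  shows "z powi (1 - int n) * (1 - \<rho>\<^sup>2) / (z - \<rho>)\<^sup>2 = z ^ (n + 1) * (1 - \<rho>\<^sup>2) / (1 - \<rho> * z)\<^sup>2
    \<and> eigenvalue (KMS n \<rho>) (z powi (1 - int n) * (1 - \<rho>\<^sup>2) / (z - \<rho>)\<^sup>2)"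
proof -
  have root: "z ^ n * (z - \<rho>) = 1 * (1 - \<rho> * z)"
    using assms(4) by (simp add: type1_def s_fun_def algebra_simps)
  then have "z \<noteq> 0" using assms(1) by (auto simp: power_0_left)
  show ?thesis
    using KMS_eigenvalue_of_root[OF assms(1) _ root assms(3,2)] root_eigenvalue_formulas[OF _ root \<open>z \<noteq> 0\<close>]
    by simp
qed

lemma type2_eigenvalue:
  assumes "n \<ge> 2" "\<rho>\<^sup>2 \<noteq> 1" "z\<^sup>2 \<noteq> 1" "type2 n \<rho> z"
  shows "- (z powi (1 - int n) * (1 - \<rho>\<^sup>2) / (z - \<rho>)\<^sup>2) = - (z ^ (n + 1) * (1 - \<rho>\<^sup>2) / (1 - \<rho> * z)\<^sup>2)
    \<and> eigenvalue (KMS n \<rho>) (- (z powi (1 - int n) * (1 - \<rho>\<^sup>2) / (z - \<rho>)\<^sup>2))"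
proof -
  have root: "z ^ n * (z - \<rho>) = -1 * (1 - \<rho> * z)"
    using assms(4) by (simp add: type2_def c_fun_def algebra_simps)
  then have "z \<noteq> 0" using assms(1) by (auto simp: power_0_left)
  show ?thesis
    using KMS_eigenvalue_of_root[OF assms(1) _ root assms(3,2)] root_eigenvalue_formulas[OF _ root \<open>z \<noteq> 0\<close>]
    by simp
qed

theorem theorem3p7:
  fixes n :: nat and \<rho> :: complex
  defines "\<xi> \<equiv> complex_of_real ((real n + 1) / (real n - 1))"
  defines "P \<equiv> p2n n \<rho>"
  assumes hn: "n \<ge> 2"
    and h\<rho>: "\<rho> \<notin> {-\<xi>, -1, 1, \<xi>}"
  shows "(\<forall>z. poly P z = 0 \<longrightarrow> z \<noteq> 1 \<and> z \<noteq> -1)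
    \<and> (\<forall>z. poly P z = 0 \<longrightarrow>
          (type1 n \<rho> z \<and> \<not> type2 n \<rho> z) \<or> (type2 n \<rho> z \<and> \<not> type1 n \<rho> z))
    \<and> (\<forall>z. poly P z = 0 \<and> type1 n \<rho> z \<longrightarrow>
          z powi (1 - int n) * (1 - \<rho>^2) / (z - \<rho>)^2 = z^(n+1) * (1 - \<rho>^2) / (1 - \<rho> * z)^2
          \<and> eigenvalue (KMS n \<rho>) (z powi (1 - int n) * (1 - \<rho>^2) / (z - \<rho>)^2))
    \<and> (\<forall>z. poly P z = 0 \<and> type2 n \<rho> z \<longrightarrow>
          - (z powi (1 - int n) * (1 - \<rho>^2) / (z - \<rho>)^2) = - (z^(n+1) * (1 - \<rho>^2) / (1 - \<rho> * z)^2)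
          \<and> eigenvalue (KMS n \<rho>) (- (z powi (1 - int n) * (1 - \<rho>^2) / (z - \<rho>)^2)))
    \<and> (\<Sum>z\<in>{z. poly P z = 0 \<and> type1 n \<rho> z}. order z P) = 2 * (n div 2)
    \<and> (\<Sum>z\<in>{z. poly P z = 0 \<and> type2 n \<rho> z}. order z P) = 2 * nat \<lceil>real n / 2\<rceil>
    \<and> (\<exists>A B :: complex multiset.
          size A = n div 2 \<and> size B = nat \<lceil>real n / 2\<rceil>
          \<and> (\<forall>z. (if type1 n \<rho> z then order z P else 0) = count (A + image_mset inverse A) z)
          \<and> (\<forall>z. (if type2 n \<rho> z then order z P else 0) = count (B + image_mset inverse B) z))"
proof -
  have n1: "n \<ge> 1" using hn by simp
  have \<rho>1: "\<rho>\<^sup>2 \<noteq> 1" using h\<rho> by (auto simp: power2_eq_1_iff)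
  have P_pm1: "poly P 1 \<noteq> 0" "poly P (-1) \<noteq> 0"
    using h\<rho> p2n_root_1_iff[OF hn] p2n_root_minus_1_iff[OF hn] by (auto simp: P_def \<xi>_def)
  then have root_sq_ne_1: "z\<^sup>2 \<noteq> 1" if "poly P z = 0" for z
    using that by (auto simp: power2_eq_1_iff)
  have P0: "P \<noteq> 0" using poly_p2n_0[OF n1, of \<rho>] by (auto simp: P_def)
  obtain A where A: "size A = n div 2" "filter_mset (type1 n \<rho>) (proots P) = A + image_mset inverse A"
    using type1_roots_inverse_pairs[OF n1 \<rho>1 P_pm1[unfolded P_def]] by (auto simp: P_def)
  obtain B where B: "size B = nat \<lceil>real n / 2\<rceil>" "filter_mset (type2 n \<rho>) (proots P) = B + image_mset inverse B"
    using type2_roots_inverse_pairs[OF n1 \<rho>1 P_pm1[unfolded P_def]] by (auto simp: P_def nat_ceiling_half)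
  show ?thesis
    apply (intro conjI)
    subgoal using P_pm1 by auto
    subgoal using p2n_root_type[OF n1 \<rho>1] by (simp add: P_def)
    subgoal using type1_eigenvalue[OF hn \<rho>1 root_sq_ne_1] by blast
    subgoal using type2_eigenvalue[OF hn \<rho>1 root_sq_ne_1] by blast
    subgoal using sum_order_eq_size_filter_proots[OF P0] A by simp
    subgoal using sum_order_eq_size_filter_proots[OF P0] B by simp
    subgoal by (rule exI[of _ A], rule exI[of _ B]) (use A B P0 in \<open>simp flip: A(2) B(2)\<close>)
    done
qed

end
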